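(* Let $n\ge1$, $s\in(0,1)$, let $\Omega\subset\mathbb{R}^n$ be open, bounded, with Lipschitz boundary, and let $K:\mathbb{R}^n\times\mathbb{R}^n\to[0,+\infty]$ be measurable with $K(x,z)\ge \frac{c\,\chi_{[0,\varrho)}(|x-z|)}{|x-z|^{n+2s}}$ for all $x,z$, for some $c\in(0,+\infty)$ and $\varrho\in(0,+\infty]$. Then there exists $C_\star>0$, depending only on $n,s,c,\varrho,\Omega$, such that for every measurable $u:\mathbb{R}^n\to\mathbb{R}$ with $u=0$ in $\mathbb{R}^n\setminus\Omega$, $$\iint_{\mathbb{R}^n\times\mathbb{R}^n}\frac{|u(x)-u(z)|^2}{|x-z|^{n+2s}}\,dx\,dz\le C_\star\iint_{\mathbb{R}^n\times\mathbb{R}^n}|u(x)-u(z)|^2K(x,z)\,dx\,dz .$$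
   Context: $\chi_{[0,\varrho)}$ denotes the indicator function of $[0,\varrho)$. *)

theory Defs
  imports "HOL-Analysis.Analysis"
begin

text \<open>Lipschitz boundary (standard definition, up to a rigid motion): every boundary
point p has a ball around it in which, for some unit direction e, the set is the
strict supergraph (in direction e) of a Lipschitz function g defined on the
hyperplane orthogonal to e.\<close>
definition lipschitz_boundary :: "'a::euclidean_space set \<Rightarrow> bool" where
  "lipschitz_boundary \<Omega> \<longleftrightarrow>
     (\<forall>p \<in> frontier \<Omega>. \<exists>r>0. \<exists>e. norm e = 1 \<and>
        (\<exists>(g::'a \<Rightarrow> real) L. L-lipschitz_on {y. y \<bullet> e = 0} g \<and>
           \<Omega> \<inter> ball p r = {x \<in> ball p r. g (x - (x \<bullet> e) *\<^sub>R e) < x \<bullet> e}))"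

end

theory Submission
  imports Defs
begin

(* Split the double integral at a distance r \<le> \<rho>. Near the diagonal the lower bound on K
   dominates the integrand by K / c. Away from it, (u x - u z)^2 \<le> 2 u(x)^2 + 2 u(z)^2 and
   |w|^(-n-2s) is integrable on {|w| \<ge> r}, so the far part is at most a constant times the
   L^2 norm of u. Since u vanishes outside a ball, a Poincare inequality bounds that L^2 norm by
   the energy of the differences at distance < r, which the near part controls again. *)

lemma nn_integral_lborel_translate:
  fixes f :: "'a::euclidean_space \<Rightarrow> ennreal"
  assumes "f \<in> borel_measurable borel"
  shows "(\<integral>\<^sup>+x. f (t + x) \<partial>lborel) = (\<integral>\<^sup>+x. f x \<partial>lborel)"
proof -
  have "(\<integral>\<^sup>+x. f x \<partial>lborel) = (\<integral>\<^sup>+x. f x \<partial>distr lborel borel ((+) t))"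
    by (simp add: lborel_distr_plus)
  also have "\<dots> = (\<integral>\<^sup>+x. f (t + x) \<partial>lborel)"
    using assms by (subst nn_integral_distr) auto
  finally show ?thesis ..
qed

lemma dyadic_intervalE:
  fixes r x :: real
  assumes "0 < r" "r \<le> x"
  obtains j :: nat where "2 ^ j * r \<le> x" "x < 2 ^ Suc j * r"
proof -
  obtain n :: nat where "x / r < 2 ^ n"
    using real_arch_pow[of 2 "x / r"] by auto
  then have "x < 2 ^ n * r" using assms(1) by (simp add: field_simps)
  then obtain j where "\<not> x < 2 ^ j * r" "x < 2 ^ Suc j * r"
    using ex_least_nat_less[of "\<lambda>n. x < 2 ^ n * r" n] assms(2) by auto
  then show ?thesis by (intro that[of j]) auto
qed

lemma dyadic_powr_eq:
  fixes r a :: real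
  assumes "0 < r"
  shows "(2 ^ j * r) powr -a * (2 ^ Suc j * r) ^ n
    = 2 ^ n * r powr (real n - a) * (2 powr (real n - a)) ^ j"
proof -
  define X where "X = 2 ^ j * r"
  have "0 < X"
    using assms by (simp add: X_def)
  then have "(2 ^ Suc j * r) ^ n = 2 ^ n * X powr real n"
    by (simp add: X_def powr_realpow power_mult_distrib)
  then have "(2 ^ j * r) powr -a * (2 ^ Suc j * r) ^ n = 2 ^ n * (X powr -a * X powr real n)"
    unfolding X_def[symmetric] by (simp only: mult_ac)
  also have "X powr -a * X powr real n = X powr (real n - a)"
    by (simp add: powr_add[symmetric])
  also have "X powr (real n - a) = r powr (real n - a) * (2 powr (real n - a)) ^ j"
    using assms by (simp add: X_def powr_mult powr_power powr_powr mult.commute flip: powr_realpow)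
  finally show ?thesis
    by (simp only: mult_ac)
qed

lemma norm_powr_tail_le_dyadic_sum:
  fixes w :: "'a::real_normed_vector"
  assumes "0 < r" "0 \<le> a"
  shows "ennreal (if r \<le> norm w then norm w powr -a else 0)
    \<le> (\<Sum>j. ennreal ((2 ^ j * r) powr -a) * indicator (ball 0 (2 ^ Suc j * r)) w)"
proof (cases "r \<le> norm w")
  case True
  define f where "f = (\<lambda>i. ennreal ((2 ^ i * r) powr -a) * indicator (ball 0 (2 ^ Suc i * r)) w)"
  obtain j where j: "2 ^ j * r \<le> norm w" "norm w < 2 ^ Suc j * r"
    using dyadic_intervalE assms(1) True by blast
  have "norm w powr -a \<le> (2 ^ j * r) powr -a"
    using j assms by (intro powr_mono2') auto
  then have "ennreal (norm w powr -a) \<le> f j"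
    using j by (simp add: f_def ennreal_leI)
  also have "\<dots> \<le> suminf f"
    using sum_le_suminf[of f "{j}"] by simp
  finally show ?thesis
    using True by (simp add: f_def)
qed simp

lemma nn_integral_norm_powr_tail_less_top:
  assumes "0 < r" "real DIM('a) < a"
  shows "(\<integral>\<^sup>+w. ennreal (if r \<le> norm w then norm w powr -a else 0) \<partial>(lborel::'a::euclidean_space measure))
    < \<infinity>"
proof -
  define n where "n = DIM('a)"
  define q where "q = (2::real) powr (real n - a)"
  define A where "A = unit_ball_vol (real n) * 2 ^ n * r powr (real n - a)"
  define g where "g j = (\<lambda>w. ennreal ((2 ^ j * r) powr -a) * indicator (ball (0::'a) (2 ^ Suc j * r)) w)"
    for j :: nat
  have q: "0 < q" "q < 1"
    unfolding q_def using assms(2) n_def by (auto intro!: powr_less_one)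
  have "0 \<le> a"
    using assms(2) of_nat_0_le_iff[of "DIM('a)"] by linarith
  then have "(\<integral>\<^sup>+w. ennreal (if r \<le> norm w then norm w powr -a else 0) \<partial>(lborel::'a measure))
      \<le> (\<integral>\<^sup>+w. (\<Sum>j. g j w) \<partial>lborel)"
    unfolding g_def using assms(1) by (intro nn_integral_mono norm_powr_tail_le_dyadic_sum)
  also have "\<dots> = (\<Sum>j. \<integral>\<^sup>+w. g j w \<partial>lborel)"
  proof (rule nn_integral_suminf)
    show "g j \<in> borel_measurable lborel" for j
      unfolding g_def
      by (intro borel_measurable_times_ennreal borel_measurable_const borel_measurable_indicator) simp
  qed
  also have "\<dots> = (\<Sum>j. ennreal (A * q ^ j))"
  proof (rule suminf_cong)
    fix j :: nat
    have "(2 ^ j * r) powr -a * (unit_ball_vol (real n) * (2 ^ Suc j * r) ^ n) = A * q ^ j"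
      using dyadic_powr_eq[OF assms(1), of j a n] unfolding A_def q_def by (simp add: mult_ac)
    then show "(\<integral>\<^sup>+w. g j w \<partial>lborel) = ennreal (A * q ^ j)"
      using assms(1) by (simp add: g_def nn_integral_cmult_indicator emeasure_ball n_def flip: ennreal_mult)
  qed
  also have "\<dots> = ennreal (\<Sum>j. A * q ^ j)"
    using q assms(1) unfolding A_def
    by (intro suminf_ennreal2) (auto intro!: summable_mult summable_geometric)
  finally show ?thesis
    using order_le_less_trans by fastforce
qed

lemma square_le_sum_telescope:
  fixes f :: "nat \<Rightarrow> real"
  assumes "f k = 0"
  shows "(f 0)\<^sup>2 \<le> real k * (\<Sum>j<k. (f j - f (Suc j))\<^sup>2)"
proof -
  have "(\<Sum>j<k. f j - f (Suc j)) = f 0"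
    using sum_lessThan_telescope'[of f k] assms by simp
  then show ?thesis
    using sum_squared_le_sum_of_squares[of "\<lambda>j. f j - f (Suc j)" "{..<k}"]
    by (simp add: mult.commute)
qed

lemma nn_integral_square_le_shift_diff:
  fixes u :: "'a::euclidean_space \<Rightarrow> real"
  assumes [measurable]: "u \<in> borel_measurable borel"
    and vanish: "\<And>x. R \<le> norm x \<Longrightarrow> u x = 0"
    and far: "2 * R \<le> real k * norm h"
  shows "(\<integral>\<^sup>+x. ennreal ((u x)\<^sup>2) \<partial>lborel)
    \<le> ennreal (real k ^ 2) * (\<integral>\<^sup>+x. ennreal ((u x - u (x + h))\<^sup>2) \<partial>lborel)"
proof -
  define d where "d x j = u (x + real j *\<^sub>R h) - u (x + real (Suc j) *\<^sub>R h)" for x j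
  have [measurable]: "(\<lambda>x. ennreal ((d x j)\<^sup>2)) \<in> borel_measurable borel" for j
    unfolding d_def by measurable
  have pointwise: "(u x)\<^sup>2 \<le> real k * (\<Sum>j<k. (d x j)\<^sup>2)" for x
  proof -
    have "R \<le> norm (x + real k *\<^sub>R h)" if "norm x < R"
      using norm_triangle_ineq4[of "x + real k *\<^sub>R h" x] that far by simp
    then show ?thesis
      using square_le_sum_telescope[of "\<lambda>j. u (x + real j *\<^sub>R h)" k] vanish[of x] vanish
      unfolding d_def by (cases "R \<le> norm x") (auto simp: sum_nonneg)
  qed
  have shift: "(\<integral>\<^sup>+x. ennreal ((d x j)\<^sup>2) \<partial>lborel)
      = (\<integral>\<^sup>+x. ennreal ((u x - u (x + h))\<^sup>2) \<partial>lborel)" for j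
  proof -
    have "d x j = u (real j *\<^sub>R h + x) - u (real j *\<^sub>R h + x + h)" for x
      unfolding d_def by (simp add: algebra_simps)
    then show ?thesis
      by (simp add: nn_integral_lborel_translate[where f = "\<lambda>y. ennreal ((u y - u (y + h))\<^sup>2)"])
  qed
  have integral_sum: "(\<integral>\<^sup>+x. (\<Sum>j<k. ennreal ((d x j)\<^sup>2)) \<partial>lborel)
      = (\<Sum>j<k. \<integral>\<^sup>+x. ennreal ((d x j)\<^sup>2) \<partial>lborel)"
    by (rule nn_integral_sum) measurable
  have "(\<integral>\<^sup>+x. ennreal ((u x)\<^sup>2) \<partial>lborel)
      \<le> (\<integral>\<^sup>+x. ennreal (real k) * (\<Sum>j<k. ennreal ((d x j)\<^sup>2)) \<partial>lborel)"
    using pointwise by (intro nn_integral_mono) (simp add: sum_nonneg ennreal_leI flip: ennreal_mult)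
  also have "\<dots> = ennreal (real k) * (\<integral>\<^sup>+x. (\<Sum>j<k. ennreal ((d x j)\<^sup>2)) \<partial>lborel)"
    by (rule nn_integral_cmult) measurable
  also have "\<dots> = ennreal (real k) * (\<Sum>j<k. \<integral>\<^sup>+x. ennreal ((d x j)\<^sup>2) \<partial>lborel)"
    by (simp only: integral_sum)
  also have "\<dots> = ennreal (real k ^ 2) * (\<integral>\<^sup>+x. ennreal ((u x - u (x + h))\<^sup>2) \<partial>lborel)"
    by (simp only: shift sum_constant card_lessThan)
      (simp add: power2_eq_square ennreal_mult ennreal_of_nat_eq_real_of_nat mult.assoc)
  finally show ?thesis .
qed

definition truncated_energy :: "real \<Rightarrow> ('a::euclidean_space \<Rightarrow> real) \<Rightarrow> ennreal" where
  "truncated_energy r u =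
     (\<integral>\<^sup>+(x, z). ennreal (if dist x z < r then (u x - u z)\<^sup>2 else 0) \<partial>(lborel \<Otimes>\<^sub>M lborel))"

lemma nn_integral_shift_diff_le_truncated_energy:
  fixes u :: "'a::euclidean_space \<Rightarrow> real"
  assumes [measurable]: "u \<in> borel_measurable borel" "H \<in> sets borel"
    and short: "\<And>h. h \<in> H \<Longrightarrow> norm h < r"
  shows "(\<integral>\<^sup>+h. indicator H h * (\<integral>\<^sup>+x. ennreal ((u x - u (x + h))\<^sup>2) \<partial>lborel) \<partial>lborel)
    \<le> truncated_energy r u"
proof -
  have "(\<integral>\<^sup>+h. indicator H h * (\<integral>\<^sup>+x. ennreal ((u x - u (x + h))\<^sup>2) \<partial>lborel) \<partial>lborel)
      = (\<integral>\<^sup>+h. \<integral>\<^sup>+x. indicator H h * ennreal ((u x - u (x + h))\<^sup>2) \<partial>lborel \<partial>lborel)"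
    by (intro nn_integral_cong nn_integral_cmult[symmetric]) measurable
  also have "\<dots> = (\<integral>\<^sup>+x. \<integral>\<^sup>+h. indicator H h * ennreal ((u x - u (x + h))\<^sup>2) \<partial>lborel \<partial>lborel)"
    by (rule lborel_pair.Fubini') measurable
  also have "\<dots> = (\<integral>\<^sup>+x. \<integral>\<^sup>+z. indicator H (z - x) * ennreal ((u x - u z)\<^sup>2) \<partial>lborel \<partial>lborel)"
  proof (rule nn_integral_cong)
    fix x :: 'a
    have "(\<integral>\<^sup>+z. indicator H (z - x) * ennreal ((u x - u z)\<^sup>2) \<partial>lborel)
        = (\<integral>\<^sup>+h. indicator H (x + h - x) * ennreal ((u x - u (x + h))\<^sup>2) \<partial>lborel)"
      by (rule nn_integral_lborel_translate[symmetric]) measurable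
    then show "(\<integral>\<^sup>+h. indicator H h * ennreal ((u x - u (x + h))\<^sup>2) \<partial>lborel)
        = (\<integral>\<^sup>+z. indicator H (z - x) * ennreal ((u x - u z)\<^sup>2) \<partial>lborel)"
      by simp
  qed
  also have "\<dots> \<le> (\<integral>\<^sup>+x. \<integral>\<^sup>+z. ennreal (if dist x z < r then (u x - u z)\<^sup>2 else 0) \<partial>lborel \<partial>lborel)"
  proof (intro nn_integral_mono)
    fix x z :: 'a
    show "indicator H (z - x) * ennreal ((u x - u z)\<^sup>2)
        \<le> ennreal (if dist x z < r then (u x - u z)\<^sup>2 else 0)"
      using short[of "z - x"] by (simp add: indicator_def dist_norm norm_minus_commute[of x z])
  qed
  also have "\<dots> = truncated_energy r u"
  proof -
    have "(\<lambda>(x, z). ennreal (if dist x z < r then (u x - u z)\<^sup>2 else 0))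
        \<in> borel_measurable (lborel \<Otimes>\<^sub>M lborel)"
      by measurable
    from lborel.nn_integral_fst[OF this] show ?thesis
      unfolding truncated_energy_def by simp
  qed
  finally show ?thesis .
qed

lemma ball_in_annulusE:
  fixes r :: real
  assumes "0 < r"
  obtains c :: "'a::euclidean_space" where "\<And>h. h \<in> ball c (r / 4) \<Longrightarrow> r / 2 < norm h \<and> norm h < r"
proof -
  obtain b :: 'a where "b \<in> Basis"
    using nonempty_Basis by blast
  then have c_norm: "norm ((3 * r / 4) *\<^sub>R b) = 3 * r / 4"
    using assms by simp
  show ?thesis
  proof (rule that)
    fix h
    assume "h \<in> ball ((3 * r / 4) *\<^sub>R b) (r / 4)"
    then have "norm ((3 * r / 4) *\<^sub>R b - h) < r / 4"
      by (simp add: dist_norm)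
    then show "r / 2 < norm h \<and> norm h < r"
      using c_norm norm_triangle_ineq3[of "(3 * r / 4) *\<^sub>R b" h] by linarith
  qed
qed

lemma truncated_energy_poincare:
  fixes R r :: real
  assumes "0 < r"
  shows "\<exists>P\<ge>0. \<forall>u::'a::euclidean_space \<Rightarrow> real. u \<in> borel_measurable borel \<longrightarrow>
     (\<forall>x. R \<le> norm x \<longrightarrow> u x = 0) \<longrightarrow>
     (\<integral>\<^sup>+x. ennreal ((u x)\<^sup>2) \<partial>lborel) \<le> ennreal P * truncated_energy r u"
proof -
  obtain c :: 'a where annulus: "\<And>h. h \<in> ball c (r / 4) \<Longrightarrow> r / 2 < norm h \<and> norm h < r"
    using ball_in_annulusE[OF assms] by blast
  (* k shifts by any h \<in> H carry ball 0 R outside itself, and every single shift spans a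
     distance < r; averaging over h \<in> H turns the shifted differences into the truncated energy. *)
  define H where "H = ball c (r / 4)"
  define m where "m = measure lborel H"
  define k where "k = nat \<lceil>4 * R / r\<rceil>"
  have m: "0 < m" "emeasure lborel H = ennreal m"
    using assms by (simp_all add: m_def H_def emeasure_ball content_ball content_ball_pos)
  have H_sets[measurable]: "H \<in> sets borel"
    by (simp add: H_def)
  note H_norm = annulus[folded H_def]
  have H_far: "2 * R \<le> real k * norm h" if "h \<in> H" for h
  proof -
    have "2 * R \<le> real k * (r / 2)"
      using assms real_nat_ceiling_ge[of "4 * R / r"] by (simp add: k_def field_simps)
    also have "\<dots> \<le> real k * norm h"
      using H_norm[OF that] by (intro mult_left_mono) auto
    finally show ?thesis .
  qed
  show ?thesis
  proof (intro exI[of _ "real k ^ 2 / m"] conjI allI impI)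
    fix u :: "'a \<Rightarrow> real"
    assume [measurable]: "u \<in> borel_measurable borel" and vanish: "\<forall>x. R \<le> norm x \<longrightarrow> u x = 0"
    define I where "I = (\<integral>\<^sup>+x. ennreal ((u x)\<^sup>2) \<partial>lborel)"
    define D where "D h = (\<integral>\<^sup>+x. ennreal ((u x - u (x + h))\<^sup>2) \<partial>lborel)" for h
    have "ennreal m * I = (\<integral>\<^sup>+h. indicator H h * I \<partial>lborel)"
      using m H_sets by (subst nn_integral_multc) (simp_all add: mult.commute)
    also have "\<dots> \<le> (\<integral>\<^sup>+h. indicator H h * (ennreal (real k ^ 2) * D h) \<partial>lborel)"
      using nn_integral_square_le_shift_diff[of u R k] H_far vanish
      by (intro nn_integral_mono) (auto simp: D_def I_def indicator_def)
    also have "\<dots> = ennreal (real k ^ 2) * (\<integral>\<^sup>+h. indicator H h * D h \<partial>lborel)"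
      unfolding D_def by (subst nn_integral_cmult[symmetric]) (measurable, simp add: mult_ac)
    also have "\<dots> \<le> ennreal (real k ^ 2) * truncated_energy r u"
      unfolding D_def using H_norm
      by (intro mult_left_mono nn_integral_shift_diff_le_truncated_energy) auto
    finally have "ennreal m * I \<le> ennreal (real k ^ 2) * truncated_energy r u" .
    then have "ennreal (1 / m) * (ennreal m * I)
        \<le> ennreal (1 / m) * (ennreal (real k ^ 2) * truncated_energy r u)"
      by (rule mult_left_mono) simp
    then show "I \<le> ennreal (real k ^ 2 / m) * truncated_energy r u"
      using m by (simp add: mult.assoc[symmetric] flip: ennreal_mult)
  qed (use m in simp)
qed

lemma nn_integral_dist_kernel:
  fixes f :: "'a::euclidean_space \<Rightarrow> ennreal" and t :: "real \<Rightarrow> ennreal"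
  assumes [measurable]: "f \<in> borel_measurable borel" "t \<in> borel_measurable borel"
  shows "(\<integral>\<^sup>+(x, z). f x * t (dist x z) \<partial>(lborel \<Otimes>\<^sub>M lborel))
      = (\<integral>\<^sup>+w. t (norm w) \<partial>(lborel::'a measure)) * (\<integral>\<^sup>+x. f x \<partial>lborel)"
    and "(\<integral>\<^sup>+(x, z). f z * t (dist x z) \<partial>(lborel \<Otimes>\<^sub>M lborel))
      = (\<integral>\<^sup>+w. t (norm w) \<partial>(lborel::'a measure)) * (\<integral>\<^sup>+x. f x \<partial>lborel)"
proof -
  have inner: "(\<integral>\<^sup>+z. t (dist x z) \<partial>lborel) = (\<integral>\<^sup>+w. t (norm w) \<partial>(lborel::'a measure))" for x :: 'a
  proof -
    have "(\<integral>\<^sup>+z. t (dist x z) \<partial>lborel) = (\<integral>\<^sup>+w. t (dist x (x + w)) \<partial>lborel)"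
      by (rule nn_integral_lborel_translate[symmetric]) measurable
    then show ?thesis by (simp add: dist_norm)
  qed
  have "(\<lambda>(x, z). f x * t (dist x z)) \<in> borel_measurable (lborel \<Otimes>\<^sub>M lborel)"
    by measurable
  from lborel.nn_integral_fst[OF this, symmetric]
  show "(\<integral>\<^sup>+(x, z). f x * t (dist x z) \<partial>(lborel \<Otimes>\<^sub>M lborel))
      = (\<integral>\<^sup>+w. t (norm w) \<partial>(lborel::'a measure)) * (\<integral>\<^sup>+x. f x \<partial>lborel)"
    by (simp add: nn_integral_cmult inner nn_integral_multc mult.commute)
  have "(\<lambda>(x, z). f z * t (dist x z)) \<in> borel_measurable (lborel \<Otimes>\<^sub>M lborel)"
    by measurable
  from lborel_pair.nn_integral_snd[OF this, symmetric]
  show "(\<integral>\<^sup>+(x, z). f z * t (dist x z) \<partial>(lborel \<Otimes>\<^sub>M lborel))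
      = (\<integral>\<^sup>+w. t (norm w) \<partial>(lborel::'a measure)) * (\<integral>\<^sup>+x. f x \<partial>lborel)"
    by (simp add: nn_integral_cmult inner dist_commute nn_integral_multc mult.commute)
qed

definition near_energy :: "real \<Rightarrow> real \<Rightarrow> ('a::euclidean_space \<Rightarrow> real) \<Rightarrow> ennreal" where
  "near_energy r a u = (\<integral>\<^sup>+(x, z). ennreal (if dist x z < r then (u x - u z)\<^sup>2 / dist x z powr a else 0)
     \<partial>(lborel \<Otimes>\<^sub>M lborel))"

definition far_energy :: "real \<Rightarrow> real \<Rightarrow> ('a::euclidean_space \<Rightarrow> real) \<Rightarrow> ennreal" where
  "far_energy r a u = (\<integral>\<^sup>+(x, z). ennreal (if r \<le> dist x z then (u x - u z)\<^sup>2 / dist x z powr a else 0)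
     \<partial>(lborel \<Otimes>\<^sub>M lborel))"

lemma fractional_energy_eq_near_plus_far:
  fixes u :: "'a::euclidean_space \<Rightarrow> real"
  assumes [measurable]: "u \<in> borel_measurable borel"
  shows "(\<integral>\<^sup>+(x, z). ennreal ((u x - u z)\<^sup>2 / dist x z powr a) \<partial>(lborel \<Otimes>\<^sub>M lborel))
    = near_energy r a u + far_energy r a u"
proof -
  have "(\<integral>\<^sup>+(x, z). ennreal ((u x - u z)\<^sup>2 / dist x z powr a) \<partial>(lborel \<Otimes>\<^sub>M lborel))
    = (\<integral>\<^sup>+p. (\<lambda>(x, z). ennreal (if dist x z < r then (u x - u z)\<^sup>2 / dist x z powr a else 0)) p
        + (\<lambda>(x, z). ennreal (if r \<le> dist x z then (u x - u z)\<^sup>2 / dist x z powr a else 0)) p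
      \<partial>(lborel \<Otimes>\<^sub>M lborel))"
    by (intro nn_integral_cong) auto
  also have "\<dots> = near_energy r a u + far_energy r a u"
    unfolding near_energy_def far_energy_def by (rule nn_integral_add) measurable
  finally show ?thesis .
qed

lemma far_energy_le_tail:
  fixes u :: "'a::euclidean_space \<Rightarrow> real"
  assumes [measurable]: "u \<in> borel_measurable borel"
  shows "far_energy r a u
    \<le> 4 * (\<integral>\<^sup>+w. ennreal (if r \<le> norm w then norm w powr -a else 0) \<partial>(lborel::'a measure))
        * (\<integral>\<^sup>+x. ennreal ((u x)\<^sup>2) \<partial>lborel)"
proof -
  define t where "t d = ennreal (if r \<le> d then d powr -a else 0)" for d
  have [measurable]: "t \<in> borel_measurable borel"
    unfolding t_def by measurable
  have pointwise: "ennreal (if r \<le> dist x z then (u x - u z)\<^sup>2 / dist x z powr a else 0)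
      \<le> 2 * (ennreal ((u x)\<^sup>2) * t (dist x z)) + 2 * (ennreal ((u z)\<^sup>2) * t (dist x z))" for x z
  proof (cases "r \<le> dist x z")
    case True
    have "(u x - u z)\<^sup>2 \<le> 2 * (u x)\<^sup>2 + 2 * (u z)\<^sup>2"
      using zero_le_power2[of "u x + u z"] unfolding power2_diff power2_sum by linarith
    then have "(u x - u z)\<^sup>2 / dist x z powr a \<le> (2 * (u x)\<^sup>2 + 2 * (u z)\<^sup>2) / dist x z powr a"
      by (rule divide_right_mono) simp
    also have "\<dots> = 2 * ((u x)\<^sup>2 * dist x z powr -a) + 2 * ((u z)\<^sup>2 * dist x z powr -a)"
      by (simp add: powr_minus divide_inverse algebra_simps)
    finally have "ennreal ((u x - u z)\<^sup>2 / dist x z powr a)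
        \<le> ennreal (2 * ((u x)\<^sup>2 * dist x z powr -a) + 2 * ((u z)\<^sup>2 * dist x z powr -a))"
      by (rule ennreal_leI)
    then show ?thesis
      using True by (simp add: t_def ennreal_mult)
  qed simp
  define A1 where "A1 = (\<lambda>(x, z). ennreal ((u x)\<^sup>2) * t (dist x z))"
  define A2 where "A2 = (\<lambda>(x, z). ennreal ((u z)\<^sup>2) * t (dist x z))"
  have [measurable]: "A1 \<in> borel_measurable (lborel \<Otimes>\<^sub>M lborel)" "A2 \<in> borel_measurable (lborel \<Otimes>\<^sub>M lborel)"
    unfolding A1_def A2_def by measurable
  have "far_energy r a u \<le> (\<integral>\<^sup>+p. 2 * A1 p + 2 * A2 p \<partial>(lborel \<Otimes>\<^sub>M lborel))"
    unfolding far_energy_def by (intro nn_integral_mono) (clarsimp simp: pointwise A1_def A2_def)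
  also have "\<dots> = 2 * integral\<^sup>N (lborel \<Otimes>\<^sub>M lborel) A1 + 2 * integral\<^sup>N (lborel \<Otimes>\<^sub>M lborel) A2"
    by (simp add: nn_integral_add nn_integral_cmult)
  also have "\<dots> = 4 * (\<integral>\<^sup>+w. t (norm w) \<partial>(lborel::'a measure)) * (\<integral>\<^sup>+x. ennreal ((u x)\<^sup>2) \<partial>lborel)"
  proof -
    have "(\<lambda>x. ennreal ((u x)\<^sup>2)) \<in> borel_measurable borel"
      by measurable
    note kernel = nn_integral_dist_kernel[OF this \<open>t \<in> borel_measurable borel\<close>]
    show ?thesis
      unfolding A1_def A2_def kernel by (simp add: mult.assoc flip: distrib_right)
  qed
  finally show ?thesis
    by (simp add: t_def)
qed

lemma near_energy_le_kernel_energy: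
  fixes u :: "'a::euclidean_space \<Rightarrow> real" and K :: "'a \<Rightarrow> 'a \<Rightarrow> ennreal"
  assumes [measurable]: "u \<in> borel_measurable borel"
    "(\<lambda>(x, z). K x z) \<in> borel_measurable (lborel \<Otimes>\<^sub>M lborel)"
    and "0 < c"
    and K_lower: "\<And>x z. x \<noteq> z \<Longrightarrow> dist x z < r \<Longrightarrow> ennreal (c / dist x z powr a) \<le> K x z"
  shows "near_energy r a u
    \<le> ennreal (1 / c) * (\<integral>\<^sup>+(x, z). ennreal ((u x - u z)\<^sup>2) * K x z \<partial>(lborel \<Otimes>\<^sub>M lborel))"
proof -
  have pointwise: "ennreal (if dist x z < r then (u x - u z)\<^sup>2 / dist x z powr a else 0)
      \<le> ennreal (1 / c) * (ennreal ((u x - u z)\<^sup>2) * K x z)" for x z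
  proof (cases "dist x z < r \<and> x \<noteq> z")
    case True
    have "ennreal ((u x - u z)\<^sup>2 / dist x z powr a)
        = ennreal (1 / c * ((u x - u z)\<^sup>2 * (c / dist x z powr a)))"
      using \<open>0 < c\<close> by simp
    also have "\<dots> = ennreal (1 / c) * (ennreal ((u x - u z)\<^sup>2) * ennreal (c / dist x z powr a))"
      using \<open>0 < c\<close> by (simp only: ennreal_mult' zero_le_power2 zero_le_divide_1_iff less_imp_le)
    also have "\<dots> \<le> ennreal (1 / c) * (ennreal ((u x - u z)\<^sup>2) * K x z)"
      using True by (intro mult_left_mono K_lower) auto
    finally show ?thesis
      using True by simp
  qed auto
  have "(\<lambda>(x, z). ennreal ((u x - u z)\<^sup>2) * K x z) \<in> borel_measurable (lborel \<Otimes>\<^sub>M lborel)"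
    by measurable
  then show ?thesis
    unfolding near_energy_def
    by (subst nn_integral_cmult[symmetric]) (auto intro!: nn_integral_mono simp: pointwise)
qed

lemma truncated_energy_le_near_energy:
  fixes u :: "'a::euclidean_space \<Rightarrow> real"
  assumes [measurable]: "u \<in> borel_measurable borel" and "0 \<le> a"
  shows "truncated_energy r u \<le> ennreal (r powr a) * near_energy r a u"
proof -
  have pointwise: "ennreal (if dist x z < r then (u x - u z)\<^sup>2 else 0)
      \<le> ennreal (r powr a) * ennreal (if dist x z < r then (u x - u z)\<^sup>2 / dist x z powr a else 0)" for x z
  proof (cases "dist x z < r \<and> x \<noteq> z")
    case True
    then have "0 < dist x z powr a" "dist x z powr a \<le> r powr a"
      using \<open>0 \<le> a\<close> by (auto intro: powr_mono2)
    then have "(u x - u z)\<^sup>2 \<le> r powr a * ((u x - u z)\<^sup>2 / dist x z powr a)"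
      by (simp add: field_simps mult_right_mono)
    then show ?thesis
      using True by (simp add: ennreal_leI flip: ennreal_mult)
  qed auto
  have "(\<lambda>(x, z). ennreal (if dist x z < r then (u x - u z)\<^sup>2 / dist x z powr a else 0))
      \<in> borel_measurable (lborel \<Otimes>\<^sub>M lborel)"
    by measurable
  then show ?thesis
    unfolding truncated_energy_def near_energy_def
    by (subst nn_integral_cmult[symmetric]) (auto intro!: nn_integral_mono simp: pointwise)
qed

lemma fractional_energy_le_kernel_energy:
  fixes R r c a :: real
  assumes "real DIM('a) < a" "0 < r" "0 < c"
  shows "\<exists>C>0. \<forall>(K::'a::euclidean_space \<Rightarrow> 'a \<Rightarrow> ennreal) u.
     (\<lambda>(x, z). K x z) \<in> borel_measurable (lborel \<Otimes>\<^sub>M lborel) \<longrightarrow>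
     (\<forall>x z. x \<noteq> z \<and> dist x z < r \<longrightarrow> ennreal (c / dist x z powr a) \<le> K x z) \<longrightarrow>
     u \<in> borel_measurable borel \<longrightarrow> (\<forall>x. R \<le> norm x \<longrightarrow> u x = 0) \<longrightarrow>
     (\<integral>\<^sup>+(x, z). ennreal ((u x - u z)\<^sup>2 / dist x z powr a) \<partial>(lborel \<Otimes>\<^sub>M lborel))
       \<le> ennreal C * (\<integral>\<^sup>+(x, z). ennreal ((u x - u z)\<^sup>2) * K x z \<partial>(lborel \<Otimes>\<^sub>M lborel))"
proof -
  obtain P where "0 \<le> P" and poincare: "\<And>u::'a \<Rightarrow> real. u \<in> borel_measurable borel \<Longrightarrow>
      (\<forall>x. R \<le> norm x \<longrightarrow> u x = 0) \<Longrightarrow>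
      (\<integral>\<^sup>+x. ennreal ((u x)\<^sup>2) \<partial>lborel) \<le> ennreal P * truncated_energy r u"
    using truncated_energy_poincare[OF \<open>0 < r\<close>, of R] by blast
  obtain T where "0 \<le> T"
    and tail: "(\<integral>\<^sup>+w. ennreal (if r \<le> norm w then norm w powr -a else 0) \<partial>(lborel::'a measure)) = ennreal T"
    using nn_integral_norm_powr_tail_less_top[OF \<open>0 < r\<close> \<open>real DIM('a) < a\<close>]
    by (cases rule: ennreal_cases) auto
  have "0 \<le> a"
    using \<open>real DIM('a) < a\<close> of_nat_0_le_iff[of "DIM('a)"] by linarith
  define C where "C = (1 + 4 * T * P * r powr a) / c"
  show ?thesis
  proof (intro exI[of _ C] conjI allI impI)
    show "0 < C"
      using \<open>0 \<le> T\<close> \<open>0 \<le> P\<close> \<open>0 < c\<close> by (simp add: C_def add_pos_nonneg)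
    fix K :: "'a \<Rightarrow> 'a \<Rightarrow> ennreal" and u :: "'a \<Rightarrow> real"
    assume [measurable]: "(\<lambda>(x, z). K x z) \<in> borel_measurable (lborel \<Otimes>\<^sub>M lborel)"
      and K_lower: "\<forall>x z. x \<noteq> z \<and> dist x z < r \<longrightarrow> ennreal (c / dist x z powr a) \<le> K x z"
      and [measurable]: "u \<in> borel_measurable borel"
      and vanish: "\<forall>x. R \<le> norm x \<longrightarrow> u x = 0"
    let ?N = "near_energy r a u"
    have "(\<integral>\<^sup>+(x, z). ennreal ((u x - u z)\<^sup>2 / dist x z powr a) \<partial>(lborel \<Otimes>\<^sub>M lborel))
        = ?N + far_energy r a u"
      by (rule fractional_energy_eq_near_plus_far) measurable
    also have "\<dots> \<le> ?N + 4 * ennreal T * (\<integral>\<^sup>+x. ennreal ((u x)\<^sup>2) \<partial>lborel)"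
      using far_energy_le_tail[of u r a] unfolding tail by (intro add_left_mono) simp
    also have "(\<integral>\<^sup>+x. ennreal ((u x)\<^sup>2) \<partial>lborel) \<le> ennreal P * (ennreal (r powr a) * ?N)"
      using vanish \<open>0 \<le> a\<close>
      by (intro order.trans[OF poincare] mult_left_mono truncated_energy_le_near_energy) auto
    also have "?N + 4 * ennreal T * (ennreal P * (ennreal (r powr a) * ?N))
        = ennreal (1 + 4 * T * P * r powr a) * ?N"
      using \<open>0 \<le> T\<close> \<open>0 \<le> P\<close> by (simp add: ennreal_mult distrib_left distrib_right mult_ac)
    also have "?N \<le> ennreal (1 / c) * (\<integral>\<^sup>+(x, z). ennreal ((u x - u z)\<^sup>2) * K x z \<partial>(lborel \<Otimes>\<^sub>M lborel))"
      using K_lower \<open>0 < c\<close> by (intro near_energy_le_kernel_energy) auto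
    finally show "(\<integral>\<^sup>+(x, z). ennreal ((u x - u z)\<^sup>2 / dist x z powr a) \<partial>(lborel \<Otimes>\<^sub>M lborel))
        \<le> ennreal C * (\<integral>\<^sup>+(x, z). ennreal ((u x - u z)\<^sup>2) * K x z \<partial>(lborel \<Otimes>\<^sub>M lborel))"
      using \<open>0 \<le> T\<close> \<open>0 \<le> P\<close> \<open>0 < c\<close>
      by (simp add: C_def ennreal_mult mult.assoc[symmetric] divide_inverse mult_left_mono)
  qed
qed

theorem lemma2p1:
  fixes \<Omega> :: "'a::euclidean_space set" and s c :: real and \<rho> :: ereal
  assumes "0 < s" "s < 1"
    and "open \<Omega>" "bounded \<Omega>" "lipschitz_boundary \<Omega>"
    and "0 < c" "0 < \<rho>"
  shows "\<exists>C>0. \<forall>(K::'a \<Rightarrow> 'a \<Rightarrow> ennreal) (u::'a \<Rightarrow> real).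
     (\<lambda>p. K (fst p) (snd p)) \<in> borel_measurable (lborel \<Otimes>\<^sub>M lborel) \<longrightarrow>
     (\<forall>x z. x \<noteq> z \<and> ereal (dist x z) < \<rho> \<longrightarrow>
        ennreal (c / dist x z powr (real DIM('a) + 2 * s)) \<le> K x z) \<longrightarrow>
     u \<in> borel_measurable lborel \<longrightarrow>
     (\<forall>x. x \<notin> \<Omega> \<longrightarrow> u x = 0) \<longrightarrow>
     (\<integral>\<^sup>+ p. ennreal ((u (fst p) - u (snd p))\<^sup>2 / dist (fst p) (snd p) powr (real DIM('a) + 2 * s))
        \<partial>(lborel \<Otimes>\<^sub>M lborel))
     \<le> ennreal C * (\<integral>\<^sup>+ p. ennreal ((u (fst p) - u (snd p))\<^sup>2) * K (fst p) (snd p)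
        \<partial>(lborel \<Otimes>\<^sub>M lborel))"
proof -
  obtain r where "0 < r" "ereal r \<le> \<rho>"
    using \<open>0 < \<rho>\<close> by (cases \<rho>) (auto intro: that[of 1])
  obtain R where "\<Omega> \<subseteq> ball 0 R"
    using bounded_subset_ballD[OF \<open>bounded \<Omega>\<close>] by blast
  have near_\<rho>: "ereal (dist x z) < \<rho>" if "dist x z < r" for x z :: 'a
    using that \<open>ereal r \<le> \<rho>\<close> less_le_trans[of "ereal (dist x z)" "ereal r" \<rho>] by simp
  have outside_\<Omega>: "x \<notin> \<Omega>" if "R \<le> norm x" for x :: 'a
    using that \<open>\<Omega> \<subseteq> ball 0 R\<close> by auto
  have "real DIM('a) < real DIM('a) + 2 * s"
    using \<open>0 < s\<close> by simp
  from fractional_energy_le_kernel_energy[OF this \<open>0 < r\<close> \<open>0 < c\<close>, of R]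
  show ?thesis
    unfolding case_prod_beta' by (rule ex_forward) (use near_\<rho> outside_\<Omega> in auto)
qed

end
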